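(* Let $\mathbb B=\mathbb{F}_2^4$ and let $\circ$ be an alternative operation on $\mathbb B$. Let $g_1,g_2\in\mathrm{GL}(\mathbb B,+)$ and $f\in\mathrm{Sym}(\mathbb B)$. Then for any $g_1'\in g_1H_\circ$ and any $g_2'\in H_\circ g_2$ one has $\delta^\circ_{g_2fg_1}=\delta^\circ_{g_2'fg_1'}$.
   Context: Maps are written in postfix notation: $xf$ is the image of $x$, and $fg$ means first $f$, then $g$. An alternative operation on $\mathbb B$ is defined from an elementary abelian $2$-subgroup $T<\mathrm{AGL}(\mathbb B,+)$ acting regularly: with $\tau_a$ the unique element of $T$ with $0\tau_a=a$, $a\circ b:=a\tau_b$; $\mathrm{AGL}(\mathbb B,\circ)$ is the normaliser of $T$ in $\mathrm{Sym}(\mathbb B)$ and $\mathrm{GL}(\mathbb B,\circ)$ its stabiliser of $0$; $H_\circ:=\mathrm{GL}(\mathbb B,+)\cap\mathrm{GL}(\mathbb B,\circ)$. For $f\in\mathrm{Sym}(\mathbb B)$, $\delta^\circ_f(a,b)=\#\{x\in\mathbb B: xf\circ(x\circ a)f=b\}$ and the $\circ$-differential uniformity is $\delta^\circ_f=\max_{a\neq0,\,b}\delta^\circ_f(a,b)$. *)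

theory Defs
  imports "HOL-Analysis.Analysis" "HOL-Library.Z2"
begin

text \<open>Maps are HOL functions; the paper's postfix x f is written f x, and the
  paper's postfix product f g (first f, then g) is written g \<circ> f.\<close>

type_synonym B = "bit ^ 4"

text \<open>GL(B,+): bijective additive (= F_2-linear) maps.\<close>
definition GL_plus :: "(B \<Rightarrow> B) set" where
  "GL_plus = {g. bij g \<and> (\<forall>x y. g (x + y) = g x + g y)}"

definition AGL_plus :: "(B \<Rightarrow> B) set" where
  "AGL_plus = {t. \<exists>A\<in>GL_plus. \<exists>b. \<forall>x. t x = A x + b}"

text \<open>T is an elementary abelian 2-subgroup of AGL(B,+) acting regularly on B.\<close>
definition alt_translation_group :: "(B \<Rightarrow> B) set \<Rightarrow> bool" where
  "alt_translation_group T \<longleftrightarrow>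
     T \<subseteq> AGL_plus \<and> id \<in> T \<and>
     (\<forall>s\<in>T. \<forall>t\<in>T. s \<circ> t \<in> T) \<and>
     (\<forall>t\<in>T. inv t \<in> T) \<and>
     (\<forall>s\<in>T. \<forall>t\<in>T. s \<circ> t = t \<circ> s) \<and>
     (\<forall>t\<in>T. t \<circ> t = id) \<and>
     (\<forall>a. \<exists>!t. t \<in> T \<and> t 0 = a)"

definition tau :: "(B \<Rightarrow> B) set \<Rightarrow> B \<Rightarrow> (B \<Rightarrow> B)" where
  "tau T a = (THE t. t \<in> T \<and> t 0 = a)"

definition circ_op :: "(B \<Rightarrow> B) set \<Rightarrow> B \<Rightarrow> B \<Rightarrow> B" where
  "circ_op T a b = tau T b a"

text \<open>AGL(B,\<circ>): normaliser of T in Sym(B).\<close>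
definition AGL_circ :: "(B \<Rightarrow> B) set \<Rightarrow> (B \<Rightarrow> B) set" where
  "AGL_circ T = {g. bij g \<and> (\<lambda>t. inv g \<circ> t \<circ> g) ` T = T}"

definition GL_circ :: "(B \<Rightarrow> B) set \<Rightarrow> (B \<Rightarrow> B) set" where
  "GL_circ T = {g \<in> AGL_circ T. g 0 = 0}"

definition H_circ :: "(B \<Rightarrow> B) set \<Rightarrow> (B \<Rightarrow> B) set" where
  "H_circ T = GL_plus \<inter> GL_circ T"

definition delta_circ :: "(B \<Rightarrow> B) set \<Rightarrow> (B \<Rightarrow> B) \<Rightarrow> B \<Rightarrow> B \<Rightarrow> nat" where
  "delta_circ T f a b = card {x. circ_op T (f x) (f (circ_op T x a)) = b}"

definition diff_unif_circ :: "(B \<Rightarrow> B) set \<Rightarrow> (B \<Rightarrow> B) \<Rightarrow> nat" where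
  "diff_unif_circ T f = Max {delta_circ T f a b | a b. a \<noteq> 0}"

end

theory Submission
  imports Defs
begin

text \<open>Every h in GL(B,\<circ>) is an automorphism of (B,\<circ>): conjugating the translation
  \<tau>_b by h gives a translation sending 0 to h b, i.e. \<tau>_(h b). Hence pre- and
  post-composing f with elements of GL(B,\<circ>) only relabels the pairs (a,b) and the
  solutions x counted by \<delta>^\<circ>_f(a,b), and the maximum over a \<noteq> 0 is unchanged.\<close>

lemma tau_eq_iff:
  assumes "alt_translation_group T"
  shows "tau T a = t \<longleftrightarrow> t \<in> T \<and> t 0 = a"
proof -
  have unique: "\<exists>!t. t \<in> T \<and> t 0 = a"
    using assms unfolding alt_translation_group_def by (elim conjE) (rule spec)
  show ?thesis
  proof
    show "tau T a = t \<Longrightarrow> t \<in> T \<and> t 0 = a"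
      using theI'[OF unique] unfolding tau_def by simp
    show "t \<in> T \<and> t 0 = a \<Longrightarrow> tau T a = t"
      using the1_equality[OF unique] unfolding tau_def by simp
  qed
qed

lemma tau_mem: "alt_translation_group T \<Longrightarrow> tau T a \<in> T"
  and tau_zero: "alt_translation_group T \<Longrightarrow> tau T a 0 = a"
  using tau_eq_iff[of T a "tau T a"] by simp_all

lemma GL_circD:
  assumes "h \<in> GL_circ T"
  shows "bij h" and "(\<lambda>t. inv h \<circ> t \<circ> h) ` T = T" and "h 0 = 0"
  using assms unfolding GL_circ_def AGL_circ_def by simp_all

lemma GL_circ_circ_op:
  assumes T: "alt_translation_group T" and h: "h \<in> GL_circ T"
  shows "h (circ_op T a b) = circ_op T (h a) (h b)"
proof -
  have "tau T b \<in> (\<lambda>t. inv h \<circ> t \<circ> h) ` T"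
    using GL_circD(2)[OF h] tau_mem[OF T] by simp
  then obtain t where t: "t \<in> T" and tau_b: "tau T b = inv h \<circ> t \<circ> h"
    by blast
  have h_inv: "h (inv h x) = x" for x
    using GL_circD(1)[OF h] by (simp add: bij_is_surj surj_f_inv_f)
  have "h b = t 0"
    using tau_zero[OF T, of b] tau_b GL_circD(3)[OF h] h_inv by (metis comp_apply)
  then have "tau T (h b) = t"
    unfolding tau_eq_iff[OF T] using t by simp
  moreover have "h (tau T b a) = t (h a)"
    using tau_b h_inv by simp
  ultimately show ?thesis
    unfolding circ_op_def by simp
qed

lemma delta_circ_comp_GL_circ:
  assumes T: "alt_translation_group T" and h1: "h1 \<in> GL_circ T" and h2: "h2 \<in> GL_circ T"
  shows "delta_circ T (h1 \<circ> F \<circ> h2) a b = delta_circ T F (h2 a) (inv h1 b)"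
proof -
  let ?S = "{y. circ_op T (F y) (F (circ_op T y (h2 a))) = inv h1 b}"
  have "{x. circ_op T ((h1 \<circ> F \<circ> h2) x) ((h1 \<circ> F \<circ> h2) (circ_op T x a)) = b} = h2 -` ?S"
    using GL_circ_circ_op[OF T h1] GL_circ_circ_op[OF T h2]
      bij_inv_eq_iff[OF GL_circD(1)[OF h1]] by auto
  moreover have "card (h2 -` ?S) = card ?S"
    using GL_circD(1)[OF h2] by (intro card_vimage_inj) (auto simp: bij_is_inj bij_is_surj)
  ultimately show ?thesis
    unfolding delta_circ_def by simp
qed

lemma diff_unif_circ_comp_GL_circ:
  assumes T: "alt_translation_group T" and h1: "h1 \<in> GL_circ T" and h2: "h2 \<in> GL_circ T"
  shows "diff_unif_circ T (h1 \<circ> F \<circ> h2) = diff_unif_circ T F"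
proof -
  have bij1: "bij h1" and bij2: "bij h2" and h2_0: "h2 0 = 0"
    using GL_circD[OF h1] GL_circD[OF h2] by auto
  have "{delta_circ T (h1 \<circ> F \<circ> h2) a b | a b. a \<noteq> 0} = {delta_circ T F a b | a b. a \<noteq> 0}"
  proof (intro equalityI subsetI)
    fix v assume "v \<in> {delta_circ T (h1 \<circ> F \<circ> h2) a b | a b. a \<noteq> 0}"
    then obtain a b where "v = delta_circ T F (h2 a) (inv h1 b)" and "a \<noteq> 0"
      using delta_circ_comp_GL_circ[OF T h1 h2] by blast
    moreover have "h2 a \<noteq> 0 \<longleftrightarrow> a \<noteq> 0"
      using h2_0 bij2 by (metis bij_is_inj injD)
    ultimately show "v \<in> {delta_circ T F a b | a b. a \<noteq> 0}" by blast
  next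
    fix v assume "v \<in> {delta_circ T F a b | a b. a \<noteq> 0}"
    then obtain a b where v: "v = delta_circ T F a b" and "a \<noteq> 0" by blast
    then have "inv h2 a \<noteq> 0"
      using h2_0 bij_inv_eq_iff[OF bij2] by metis
    moreover have "v = delta_circ T (h1 \<circ> F \<circ> h2) (inv h2 a) (h1 b)"
      using v delta_circ_comp_GL_circ[OF T h1 h2] bij1 bij2
      by (simp add: bij_is_inj bij_is_surj surj_f_inv_f)
    ultimately show "v \<in> {delta_circ T (h1 \<circ> F \<circ> h2) a b | a b. a \<noteq> 0}" by blast
  qed
  then show ?thesis
    unfolding diff_unif_circ_def by simp
qed

theorem proposition4:
  fixes T :: "(B \<Rightarrow> B) set" and g1 g2 g1' g2' f :: "B \<Rightarrow> B"
  assumes "alt_translation_group T"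
    and "g1 \<in> GL_plus" and "g2 \<in> GL_plus"
    and "bij f"
    and "\<exists>h\<in>H_circ T. g1' = h \<circ> g1"
    and "\<exists>h\<in>H_circ T. g2' = g2 \<circ> h"
  shows "diff_unif_circ T (g1 \<circ> f \<circ> g2) = diff_unif_circ T (g1' \<circ> f \<circ> g2')"
proof -
  obtain h1 where h1: "h1 \<in> GL_circ T" and g1': "g1' = h1 \<circ> g1"
    using assms(5) unfolding H_circ_def by blast
  obtain h2 where h2: "h2 \<in> GL_circ T" and g2': "g2' = g2 \<circ> h2"
    using assms(6) unfolding H_circ_def by blast
  have "g1' \<circ> f \<circ> g2' = h1 \<circ> (g1 \<circ> f \<circ> g2) \<circ> h2"
    unfolding g1' g2' by (simp only: comp_assoc)
  then show ?thesis
    using diff_unif_circ_comp_GL_circ[OF assms(1) h1 h2] by simp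
qed

end
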